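(* Let $S$ be an infinite set, viewed as a structure $\mathcal{S}$ in the empty signature (only equality), and let $I$ be the set of nonempty finite subsets of $S$, ordered by inclusion, each viewed as a substructure. Then $\lim_I\mathrm{Th}(F^* )=\mathrm{Th}(\mathcal{S}^* )$, where $F$ ranges over $I$.
   Context: For a structure $\mathcal{T}$ with universe $T$, $\mathrm{Th}(\mathcal{T}^* )$ is the set of first-order sentences (in pure equality logic) with a constant for each element of $T$ that are true in $\mathcal{T}$; these are regarded as subsets of the set of sentences with constants from $S$. For a family $\{\Delta_i\}_{i\in I}$ indexed by a directed set: $\limsup_I \Delta_i=\{\theta: \forall i\ \exists j\ge i\ [\theta\in\Delta_j]\}$, $\liminf_I \Delta_i=\{\theta: \exists i\ \forall j\ge i\ [\theta\in\Delta_j]\}$, and $\lim_I\Delta_i=\Delta$ means both equal $\Delta$. *)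

theory Defs
  imports Main
begin

datatype 'a trm = Var nat | Cst 'a

datatype 'a fm =
    FEq "'a trm" "'a trm"
  | FNeg "'a fm"
  | FConj "'a fm" "'a fm"
  | FDisj "'a fm" "'a fm"
  | FEx nat "'a fm"
  | FAll nat "'a fm"

fun tvars :: "'a trm \<Rightarrow> nat set" where
  "tvars (Var n) = {n}"
| "tvars (Cst c) = {}"

fun tconsts :: "'a trm \<Rightarrow> 'a set" where
  "tconsts (Var n) = {}"
| "tconsts (Cst c) = {c}"

fun freevars :: "'a fm \<Rightarrow> nat set" where
  "freevars (FEq s t) = tvars s \<union> tvars t"
| "freevars (FNeg p) = freevars p"
| "freevars (FConj p q) = freevars p \<union> freevars q"
| "freevars (FDisj p q) = freevars p \<union> freevars q"
| "freevars (FEx x p) = freevars p - {x}"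
| "freevars (FAll x p) = freevars p - {x}"

fun fm_consts :: "'a fm \<Rightarrow> 'a set" where
  "fm_consts (FEq s t) = tconsts s \<union> tconsts t"
| "fm_consts (FNeg p) = fm_consts p"
| "fm_consts (FConj p q) = fm_consts p \<union> fm_consts q"
| "fm_consts (FDisj p q) = fm_consts p \<union> fm_consts q"
| "fm_consts (FEx x p) = fm_consts p"
| "fm_consts (FAll x p) = fm_consts p"

definition sentence :: "'a fm \<Rightarrow> bool" where
  "sentence p \<longleftrightarrow> freevars p = {}"

fun tval :: "(nat \<Rightarrow> 'a) \<Rightarrow> 'a trm \<Rightarrow> 'a" where
  "tval v (Var n) = v n"
| "tval v (Cst c) = c"

fun sat :: "'a set \<Rightarrow> (nat \<Rightarrow> 'a) \<Rightarrow> 'a fm \<Rightarrow> bool" where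
  "sat M v (FEq s t) = (tval v s = tval v t)"
| "sat M v (FNeg p) = (\<not> sat M v p)"
| "sat M v (FConj p q) = (sat M v p \<and> sat M v q)"
| "sat M v (FDisj p q) = (sat M v p \<or> sat M v q)"
| "sat M v (FEx x p) = (\<exists>a\<in>M. sat M (v(x := a)) p)"
| "sat M v (FAll x p) = (\<forall>a\<in>M. sat M (v(x := a)) p)"

text \<open>Th(T*): sentences with constants from T true in the structure with universe T.\<close>
definition Th :: "'a set \<Rightarrow> 'a fm set" where
  "Th T = {p. sentence p \<and> fm_consts p \<subseteq> T \<and> (\<forall>v. (\<forall>n. v n \<in> T) \<longrightarrow> sat T v p)}"

definition lim_sup :: "'i set \<Rightarrow> ('i \<Rightarrow> 'i \<Rightarrow> bool) \<Rightarrow> ('i \<Rightarrow> 'b set) \<Rightarrow> 'b set" where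
  "lim_sup I le D = {t. \<forall>i\<in>I. \<exists>j\<in>I. le i j \<and> t \<in> D j}"

definition lim_inf :: "'i set \<Rightarrow> ('i \<Rightarrow> 'i \<Rightarrow> bool) \<Rightarrow> ('i \<Rightarrow> 'b set) \<Rightarrow> 'b set" where
  "lim_inf I le D = {t. \<exists>i\<in>I. \<forall>j\<in>I. le i j \<longrightarrow> t \<in> D j}"

definition has_lim :: "'i set \<Rightarrow> ('i \<Rightarrow> 'i \<Rightarrow> bool) \<Rightarrow> ('i \<Rightarrow> 'b set) \<Rightarrow> 'b set \<Rightarrow> bool" where
  "has_lim I le D L \<longleftrightarrow> lim_sup I le D = L \<and> lim_inf I le D = L"

end

theory Submission
  imports Defs "HOL-Combinatorics.Transposition"
begin

text \<open>
  In the empty signature every permutation of S is an automorphism, so truth of a formula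
  depends only on the elements it names. Let F \<subseteq> S contain the named elements and have at least
  as many elements as there are named elements plus the quantifier depth. Then F and S agree on
  the formula: at each quantifier a witness in S outside F can be exchanged, by a transposition
  fixing everything named, for an element of F not yet named, and one named element is added.
  Any sentence with constants in S is therefore, for all large enough finite F, in Th F exactly
  when it is in Th S; this gives both the lim sup and the lim inf.
\<close>

fun quant_depth :: "'a fm \<Rightarrow> nat" where
  "quant_depth (FEq s t) = 0"
| "quant_depth (FNeg p) = quant_depth p"
| "quant_depth (FConj p q) = max (quant_depth p) (quant_depth q)"
| "quant_depth (FDisj p q) = max (quant_depth p) (quant_depth q)"
| "quant_depth (FEx x p) = Suc (quant_depth p)"
| "quant_depth (FAll x p) = Suc (quant_depth p)"

lemma finite_tconsts [simp]: "finite (tconsts s)"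
  by (cases s) auto

lemma finite_tvars [simp]: "finite (tvars s)"
  by (cases s) auto

lemma finite_fm_consts [simp]: "finite (fm_consts p)"
  by (induction p) auto

lemma finite_freevars [simp]: "finite (freevars p)"
  by (induction p) auto

lemma tval_permute:
  assumes "\<forall>c\<in>tconsts s. \<pi> c = c" "\<forall>y\<in>tvars s. w y = \<pi> (v y)"
  shows "tval w s = \<pi> (tval v s)"
  using assms by (cases s) auto

lemma sat_permute:
  assumes "inj \<pi>" "\<pi> ` S = S"
  shows "\<forall>c\<in>fm_consts p. \<pi> c = c \<Longrightarrow> \<forall>y\<in>freevars p. w y = \<pi> (v y) \<Longrightarrow> sat S w p \<longleftrightarrow> sat S v p"
proof (induction p arbitrary: v w)
  case (FEq s t)
  then show ?case
    using tval_permute[of s \<pi> w v] tval_permute[of t \<pi> w v] \<open>inj \<pi>\<close> by (auto dest: injD)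
next
  case (FEx x p)
  have "sat S (w(x := \<pi> a)) p \<longleftrightarrow> sat S (v(x := a)) p" for a
    using FEx by (intro FEx.IH) auto
  then have "(\<exists>a\<in>\<pi> ` S. sat S (w(x := a)) p) \<longleftrightarrow> (\<exists>a\<in>S. sat S (v(x := a)) p)"
    by auto
  then show ?case using \<open>\<pi> ` S = S\<close> by simp
next
  case (FAll x p)
  have "sat S (w(x := \<pi> a)) p \<longleftrightarrow> sat S (v(x := a)) p" for a
    using FAll by (intro FAll.IH) auto
  then have "(\<forall>a\<in>\<pi> ` S. sat S (w(x := a)) p) \<longleftrightarrow> (\<forall>a\<in>S. sat S (v(x := a)) p)"
    by auto
  then show ?case using \<open>\<pi> ` S = S\<close> by simp
qed (auto simp: ball_Un)

lemma sat_cong: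
  "\<forall>y\<in>freevars p. w y = v y \<Longrightarrow> sat S w p \<longleftrightarrow> sat S v p"
  using sat_permute[of id S p w v] by simp

lemma sat_sentence_iff:
  assumes "sentence p"
  shows "sat S w p \<longleftrightarrow> sat S v p"
  using assms by (intro sat_cong) (simp add: sentence_def)

lemma sat_update_fresh:
  assumes "a \<in> S" "b \<in> S" "a \<notin> D" "b \<notin> D" "fm_consts p \<subseteq> D" "v ` (freevars p - {x}) \<subseteq> D"
  shows "sat S (v(x := a)) p \<longleftrightarrow> sat S (v(x := b)) p"
  using assms
  by (intro sat_permute[of "transpose a b"]) (auto simp: inj_transpose transpose_def subset_iff)

lemma sat_update_representative:
  assumes "F \<subseteq> S" "D \<subseteq> F" "card D < card F" "fm_consts p \<subseteq> D" "v ` (freevars p - {x}) \<subseteq> D"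
    "a \<in> S"
  obtains b where "b \<in> F" "sat S (v(x := a)) p \<longleftrightarrow> sat S (v(x := b)) p"
proof (cases "a \<in> F")
  case False
  have "finite F" using \<open>card D < card F\<close> card.infinite by fastforce
  then obtain b where "b \<in> F" "b \<notin> D"
    using \<open>D \<subseteq> F\<close> \<open>card D < card F\<close> by (metis card_mono finite_subset not_less subsetI)
  with assms False have "sat S (v(x := a)) p \<longleftrightarrow> sat S (v(x := b)) p"
    by (intro sat_update_fresh) auto
  with \<open>b \<in> F\<close> show ?thesis by (rule that)
qed (use that in blast)

definition fm_params :: "'a fm \<Rightarrow> (nat \<Rightarrow> 'a) \<Rightarrow> 'a set" where
  "fm_params p v = fm_consts p \<union> v ` freevars p"

lemma finite_fm_params [simp]: "finite (fm_params p v)"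
  by (simp add: fm_params_def)

lemma sat_quantifier_substructure:
  fixes F S :: "'a set" and p :: "'a fm" and v :: "nat \<Rightarrow> 'a" and x :: nat
  defines "D \<equiv> fm_params (FEx x p) v"
  assumes "F \<subseteq> S" "D \<subseteq> F" "card D + quant_depth p < card F"
    and IH: "\<And>w. fm_params p w \<subseteq> F \<Longrightarrow> card (fm_params p w) + quant_depth p \<le> card F \<Longrightarrow>
      sat F w p \<longleftrightarrow> sat S w p"
  shows "sat F v (FEx x p) \<longleftrightarrow> sat S v (FEx x p)"
    and "sat F v (FAll x p) \<longleftrightarrow> sat S v (FAll x p)"
proof -
  have agree: "sat F (v(x := a)) p \<longleftrightarrow> sat S (v(x := a)) p" if "a \<in> F" for a
  proof (rule IH)
    have params: "fm_params p (v(x := a)) \<subseteq> insert a D"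
      by (auto simp: D_def fm_params_def)
    then show "fm_params p (v(x := a)) \<subseteq> F"
      using that \<open>D \<subseteq> F\<close> by blast
    have "card (fm_params p (v(x := a))) \<le> card (insert a D)"
      using params by (intro card_mono) (auto simp: D_def)
    also have "\<dots> \<le> Suc (card D)"
      by (simp add: D_def card_insert_if)
    finally show "card (fm_params p (v(x := a))) + quant_depth p \<le> card F"
      using \<open>card D + quant_depth p < card F\<close> by linarith
  qed
  have represent: "\<exists>b\<in>F. sat S (v(x := a)) p \<longleftrightarrow> sat S (v(x := b)) p" if "a \<in> S" for a
  proof -
    have "fm_consts p \<subseteq> D" "v ` (freevars p - {x}) \<subseteq> D" "card D < card F"
      using assms(4) by (auto simp: D_def fm_params_def)
    from sat_update_representative[OF \<open>F \<subseteq> S\<close> \<open>D \<subseteq> F\<close> this(3,1,2) that]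
    show ?thesis by blast
  qed
  show "sat F v (FEx x p) \<longleftrightarrow> sat S v (FEx x p)"
    using \<open>F \<subseteq> S\<close> by (auto simp: agree dest!: represent)
  show "sat F v (FAll x p) \<longleftrightarrow> sat S v (FAll x p)"
    using \<open>F \<subseteq> S\<close> agree represent by (auto 4 3)
qed

lemma sat_substructure_iff:
  assumes "F \<subseteq> S" "fm_params p v \<subseteq> F" "card (fm_params p v) + quant_depth p \<le> card F"
  shows "sat F v p \<longleftrightarrow> sat S v p"
  using assms(2,3)
proof (induction p arbitrary: v)
  case (FConj p q)
  have "fm_params p v \<subseteq> fm_params (FConj p q) v" "fm_params q v \<subseteq> fm_params (FConj p q) v"
    by (auto simp: fm_params_def)
  with FConj.prems have "sat F v p \<longleftrightarrow> sat S v p" "sat F v q \<longleftrightarrow> sat S v q"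
    by (intro FConj.IH; force dest: card_mono[OF finite_fm_params])+
  then show ?case by simp
next
  case (FDisj p q)
  have "fm_params p v \<subseteq> fm_params (FDisj p q) v" "fm_params q v \<subseteq> fm_params (FDisj p q) v"
    by (auto simp: fm_params_def)
  with FDisj.prems have "sat F v p \<longleftrightarrow> sat S v p" "sat F v q \<longleftrightarrow> sat S v q"
    by (intro FDisj.IH; force dest: card_mono[OF finite_fm_params])+
  then show ?case by simp
next
  case (FEx x p)
  with \<open>F \<subseteq> S\<close> show ?case
    by (intro sat_quantifier_substructure(1)) (auto simp: fm_params_def)
next
  case (FAll x p)
  with \<open>F \<subseteq> S\<close> show ?case
    by (intro sat_quantifier_substructure(2)) (auto simp: fm_params_def)
qed (simp_all add: fm_params_def)

lemma Th_sentence_iff: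
  assumes "sentence p" "c \<in> T"
  shows "p \<in> Th T \<longleftrightarrow> fm_consts p \<subseteq> T \<and> sat T (\<lambda>_. c) p"
  using assms sat_sentence_iff[OF \<open>sentence p\<close>, of T _ "\<lambda>_. c"] by (auto simp: Th_def)

lemma Th_substructure_iff:
  assumes "F \<subseteq> S" "F \<noteq> {}" "fm_consts p \<subseteq> F" "card (fm_consts p) + quant_depth p \<le> card F"
  shows "p \<in> Th F \<longleftrightarrow> p \<in> Th S"
proof (cases "sentence p")
  case True
  obtain c where "c \<in> F" using \<open>F \<noteq> {}\<close> by blast
  have "fm_params p (\<lambda>_. c) = fm_consts p"
    using True by (simp add: fm_params_def sentence_def)
  with assms have "sat F (\<lambda>_. c) p \<longleftrightarrow> sat S (\<lambda>_. c) p"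
    by (intro sat_substructure_iff) auto
  moreover have "c \<in> S" "fm_consts p \<subseteq> S"
    using \<open>c \<in> F\<close> assms(1,3) by auto
  ultimately show ?thesis
    using True \<open>c \<in> F\<close> assms(3) by (simp add: Th_sentence_iff)
qed (simp add: Th_def)

lemma has_lim_if_eventually_iff:
  assumes directed: "\<And>i j. i \<in> I \<Longrightarrow> j \<in> I \<Longrightarrow> \<exists>k\<in>I. le i k \<and> le j k"
    and eventually: "\<And>t. \<exists>i\<in>I. \<forall>j\<in>I. le i j \<longrightarrow> (t \<in> D j \<longleftrightarrow> t \<in> L)"
  shows "has_lim I le D L"
proof -
  have "t \<in> lim_sup I le D \<longleftrightarrow> t \<in> L" "t \<in> lim_inf I le D \<longleftrightarrow> t \<in> L" for t
  proof -
    obtain i where "i \<in> I" and i: "\<forall>j\<in>I. le i j \<longrightarrow> (t \<in> D j \<longleftrightarrow> t \<in> L)"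
      using eventually by blast
    show "t \<in> lim_sup I le D \<longleftrightarrow> t \<in> L"
      unfolding lim_sup_def using \<open>i \<in> I\<close> i directed by blast
    show "t \<in> lim_inf I le D \<longleftrightarrow> t \<in> L"
      unfolding lim_inf_def using \<open>i \<in> I\<close> i directed by blast
  qed
  then show ?thesis
    by (auto simp: has_lim_def)
qed

lemma Th_eventually_iff:
  assumes "infinite S"
  obtains F where "F \<subseteq> S" "finite F" "F \<noteq> {}"
    "\<And>G. F \<subseteq> G \<Longrightarrow> G \<subseteq> S \<Longrightarrow> finite G \<Longrightarrow> p \<in> Th G \<longleftrightarrow> p \<in> Th S"
proof -
  obtain B where B: "finite B" "card B = Suc (card (fm_consts p) + quant_depth p)" "B \<subseteq> S"
    using infinite_arbitrarily_large[OF assms] by blast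
  define F where "F = B \<union> (fm_consts p \<inter> S)"
  have "F \<subseteq> S" "finite F" "F \<noteq> {}"
    using B by (auto simp: F_def)
  moreover have "p \<in> Th G \<longleftrightarrow> p \<in> Th S" if "F \<subseteq> G" "G \<subseteq> S" "finite G" for G
  proof (cases "fm_consts p \<subseteq> S")
    case True
    have "card B \<le> card G"
      using that by (intro card_mono) (auto simp: F_def)
    with B True that \<open>F \<noteq> {}\<close> show ?thesis
      by (intro Th_substructure_iff) (auto simp: F_def)
  next
    case False
    with \<open>G \<subseteq> S\<close> show ?thesis
      by (auto simp: Th_def)
  qed
  ultimately show ?thesis
    using that by blast
qed

theorem mainTheorem10:
  fixes S :: "'a set"
  assumes "infinite S"
  shows "has_lim {F. F \<subseteq> S \<and> finite F \<and> F \<noteq> {}} (\<subseteq>) Th (Th S)"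
proof (rule has_lim_if_eventually_iff)
  fix p :: "'a fm"
  obtain F where "F \<subseteq> S" "finite F" "F \<noteq> {}"
    and "\<And>G. F \<subseteq> G \<Longrightarrow> G \<subseteq> S \<Longrightarrow> finite G \<Longrightarrow> p \<in> Th G \<longleftrightarrow> p \<in> Th S"
    using Th_eventually_iff[OF assms] by blast
  then show "\<exists>F\<in>{F. F \<subseteq> S \<and> finite F \<and> F \<noteq> {}}. \<forall>G\<in>{F. F \<subseteq> S \<and> finite F \<and> F \<noteq> {}}.
      F \<subseteq> G \<longrightarrow> (p \<in> Th G \<longleftrightarrow> p \<in> Th S)"
    by blast
qed blast

end
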